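(* Let $L$ be an oriented link in $S^3$ equipped with its $0$-framing, and let $p(L)$ denote the same framed link with the orientation forgotten. Then $$\sum_{L'\in OR(p(L))} (-1)^{\mathrm{com}(L')}a^{fr(L')} \;=\; (-1)^{\mathrm{com}(L)}\sum_{S\subset L} a^{-4\,\mathrm{lk}(S,L-S)},$$ where the right-hand sum runs over all sublinks $S$ of $L$ (unions of components, including $S=\emptyset$ and $S=L$), and $\mathrm{lk}(S,L-S)$ is the total linking number between $S$ and its complementary sublink $L-S$ (with orientations inherited from $L$).
   Context: For an unoriented framed link $P$, $OR(P)$ is the set of all oriented framed links obtained by choosing an orientation of each component of $P$ while keeping the framing. $\mathrm{com}(L')$ is the number of components. For an oriented framed link $L'$, $fr(L')$ is the number of right-hand full twists that must be removed from the framing of $L'$ to reach the $0$-framing (the framing induced by a Seifert surface of the oriented link $L'$); equivalently $fr(L')=\mathrm{lk}(L',L'')$ with $L''$ the push-off of $L'$ along its framing, oriented parallel to $L'$. The $0$-framing of the oriented link $L$ is the one with $fr(L)=0$. *)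

theory Defs
  imports "HOL-Analysis.Analysis"
begin

text \<open>Components of a link are smooth knots in R^3 (a link in S^3 can be isotoped
off a point), parametrised as 1-periodic C1 regular maps injective on [0,1).\<close>

definition smooth_knot :: "(real \<Rightarrow> real^3) \<Rightarrow> bool" where
  "smooth_knot \<gamma> \<longleftrightarrow> (\<forall>t. \<gamma> (t + 1) = \<gamma> t) \<and> \<gamma> C1_differentiable_on UNIV
     \<and> inj_on \<gamma> {0..<1} \<and> (\<forall>t. vector_derivative \<gamma> (at t) \<noteq> 0)"

definition smooth_link :: "nat \<Rightarrow> (nat \<Rightarrow> real \<Rightarrow> real^3) \<Rightarrow> bool" where
  "smooth_link n \<gamma> \<longleftrightarrow> (\<forall>i<n. smooth_knot (\<gamma> i))
     \<and> (\<forall>i<n. \<forall>j<n. i \<noteq> j \<longrightarrow> range (\<gamma> i) \<inter> range (\<gamma> j) = {})"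

definition rev_curve :: "(real \<Rightarrow> real^3) \<Rightarrow> real \<Rightarrow> real^3" where
  "rev_curve \<gamma> = (\<lambda>t. \<gamma> (- t))"

definition gauss_lk :: "(real \<Rightarrow> real^3) \<Rightarrow> (real \<Rightarrow> real^3) \<Rightarrow> real" where
  "gauss_lk \<gamma> \<delta> = 1 / (4 * pi) *
     integral (cbox (0,0) (1,1))
       (\<lambda>p. ((\<gamma> (fst p) - \<delta> (snd p)) \<bullet>
              cross3 (vector_derivative \<gamma> (at (fst p))) (vector_derivative \<delta> (at (snd p))))
            / norm (\<gamma> (fst p) - \<delta> (snd p)) ^ 3)"

definition framing_field :: "(real \<Rightarrow> real^3) \<Rightarrow> (real \<Rightarrow> real^3) \<Rightarrow> bool" where
  "framing_field \<gamma> v \<longleftrightarrow> (\<forall>t. v (t + 1) = v t) \<and> v C1_differentiable_on UNIV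
     \<and> (\<forall>t. v t \<noteq> 0 \<and> v t \<bullet> vector_derivative \<gamma> (at t) = 0)"

definition is_pushoff :: "nat \<Rightarrow> (nat \<Rightarrow> real \<Rightarrow> real^3) \<Rightarrow> nat \<Rightarrow> (real \<Rightarrow> real^3)
    \<Rightarrow> (real \<Rightarrow> real^3) \<Rightarrow> bool" where
  "is_pushoff n \<gamma> j v \<delta> \<longleftrightarrow> (\<exists>\<epsilon>>0. \<delta> = (\<lambda>t. \<gamma> j t + \<epsilon> *\<^sub>R v t) \<and>
     (\<forall>e. 0 < e \<and> e \<le> \<epsilon> \<longrightarrow> (\<forall>i<n. \<forall>s t. \<gamma> i s \<noteq> \<gamma> j t + e *\<^sub>R v t)))"

definition orient :: "nat set \<Rightarrow> (nat \<Rightarrow> real \<Rightarrow> real^3) \<Rightarrow> nat \<Rightarrow> real \<Rightarrow> real^3" where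
  "orient R \<gamma> = (\<lambda>i. if i \<in> R then rev_curve (\<gamma> i) else \<gamma> i)"

text \<open>fr(L) = lk(L, L''), L'' the push-off (oriented parallel to L).\<close>
definition fr :: "nat \<Rightarrow> (nat \<Rightarrow> real \<Rightarrow> real^3) \<Rightarrow> (nat \<Rightarrow> real \<Rightarrow> real^3) \<Rightarrow> real" where
  "fr n \<gamma> \<delta> = (\<Sum>i<n. \<Sum>j<n. gauss_lk (\<gamma> i) (\<delta> j))"

definition lk_sub :: "nat \<Rightarrow> (nat \<Rightarrow> real \<Rightarrow> real^3) \<Rightarrow> nat set \<Rightarrow> real" where
  "lk_sub n \<gamma> S = (\<Sum>i\<in>S. \<Sum>j\<in>{..<n} - S. gauss_lk (\<gamma> i) (\<gamma> j))"

end

theory Submission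
  imports Defs
begin

text \<open>Reorienting the components indexed by R multiplies the Gauss integral
  \<open>lk(\<gamma>\<^sub>i, \<delta>\<^sub>j)\<close> by \<open>\<sigma>\<^sub>i \<sigma>\<^sub>j\<close>, where \<open>\<sigma> = -1\<close> on R and 1 elsewhere:
  reversing a curve reparametrises the 1-periodic integrand by \<open>t \<mapsto> -t\<close>.
  For \<open>i \<noteq> j\<close> the push-off \<open>\<delta>\<^sub>j\<close> may be replaced by \<open>\<gamma>\<^sub>j\<close>: along the linear homotopy
  \<open>\<gamma>\<^sub>j + s v\<^sub>j\<close>, which misses \<open>\<gamma>\<^sub>i\<close>, the s-derivative of the Gauss integrand is a
  t-derivative plus a u-derivative of periodic functions, so its integral vanishes.
  As \<open>\<sigma>\<^sub>i \<sigma>\<^sub>j = -1\<close> exactly when one of i, j lies in R and lk is symmetric,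
  \<open>fr(orient R L) = fr(L) - 4 lk(R, L - R)\<close>, which is \<open>-4 lk(R, L - R)\<close> for the 0-framing.\<close>

section \<open>Closed C1 curves\<close>

definition closed_C1_curve :: "(real \<Rightarrow> 'a::real_normed_vector) \<Rightarrow> bool" where
  "closed_C1_curve c \<longleftrightarrow> (\<forall>t. c (t + 1) = c t) \<and> c C1_differentiable_on UNIV"

abbreviation velocity :: "(real \<Rightarrow> 'a::real_normed_vector) \<Rightarrow> real \<Rightarrow> 'a" where
  "velocity c t \<equiv> vector_derivative c (at t)"

lemma closed_C1_curve_periodic: "closed_C1_curve c \<Longrightarrow> c (t + 1) = c t"
  unfolding closed_C1_curve_def by blast

lemma closed_C1_curve_has_vector_derivative:
  "closed_C1_curve c \<Longrightarrow> (c has_vector_derivative velocity c t) (at t within S)"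
  unfolding closed_C1_curve_def C1_differentiable_on_eq
  by (auto intro: has_vector_derivative_at_within simp: vector_derivative_works)

lemma continuous_on_closed_C1_curve:
  assumes "closed_C1_curve c" "continuous_on S f"
  shows "continuous_on S (\<lambda>x. c (f x))"
    and "continuous_on S (\<lambda>x. velocity c (f x))"
proof -
  have "continuous_on UNIV c" "continuous_on UNIV (velocity c)"
    using assms(1) C1_differentiable_imp_continuous_on
    unfolding closed_C1_curve_def C1_differentiable_on_eq by blast+
  then show "continuous_on S (\<lambda>x. c (f x))" "continuous_on S (\<lambda>x. velocity c (f x))"
    using continuous_on_compose2[OF _ assms(2)] by blast+
qed

lemma velocity_periodic:
  assumes "closed_C1_curve c"
  shows "velocity c (t + 1) = velocity c t"
proof -
  have "((\<lambda>x. c (x + 1)) has_vector_derivative velocity c (t + 1)) (at t)"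
    using vector_diff_chain_at[OF has_vector_derivative_add[OF has_vector_derivative_id
          has_vector_derivative_const], of c]
      closed_C1_curve_has_vector_derivative[OF assms, of "t + 1" UNIV]
    by (simp add: o_def)
  moreover have "(\<lambda>x. c (x + 1)) = c"
    using closed_C1_curve_periodic[OF assms] by auto
  ultimately show ?thesis
    using vector_derivative_at by fastforce
qed

lemma closed_C1_curve_add_scaleR:
  "closed_C1_curve d \<Longrightarrow> closed_C1_curve w \<Longrightarrow> closed_C1_curve (\<lambda>u. d u + s *\<^sub>R w u)"
  unfolding closed_C1_curve_def by auto

lemma velocity_add_scaleR:
  assumes "closed_C1_curve d" "closed_C1_curve w"
  shows "velocity (\<lambda>u. d u + s *\<^sub>R w u) u = velocity d u + s *\<^sub>R velocity w u"
  using has_vector_derivative_add[OF closed_C1_curve_has_vector_derivative[OF assms(1)]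
      has_vector_derivative_scaleR[OF DERIV_const closed_C1_curve_has_vector_derivative[OF assms(2)]]]
  by (simp add: vector_derivative_at)

lemma velocity_rev_curve:
  assumes "closed_C1_curve c"
  shows "(rev_curve c has_vector_derivative - velocity c (- t)) (at t)"
    and "velocity (rev_curve c) t = - velocity c (- t)"
proof -
  show *: "(rev_curve c has_vector_derivative - velocity c (- t)) (at t)"
    using vector_diff_chain_at[OF has_vector_derivative_minus[OF has_vector_derivative_id], of c]
      closed_C1_curve_has_vector_derivative[OF assms, of "- t" UNIV]
    by (simp add: o_def rev_curve_def)
  show "velocity (rev_curve c) t = - velocity c (- t)"
    by (rule vector_derivative_at[OF *])
qed

lemma closed_C1_curve_rev_curve:
  assumes c: "closed_C1_curve c"
  shows "closed_C1_curve (rev_curve c)"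
  unfolding closed_C1_curve_def C1_differentiable_on_eq
proof (intro conjI ballI allI)
  show "rev_curve c (t + 1) = rev_curve c t" for t
    using closed_C1_curve_periodic[OF c, of "- t - 1"] by (simp add: rev_curve_def)
  show "rev_curve c differentiable at t" for t
    using differentiableI_vector[OF velocity_rev_curve(1)[OF c]] .
  have "continuous_on UNIV (\<lambda>t. - velocity c (- t))"
    by (intro continuous_intros continuous_on_closed_C1_curve[OF c])
  then show "continuous_on UNIV (velocity (rev_curve c))"
    by (simp add: velocity_rev_curve(2)[OF c])
qed

lemma range_rev_curve [simp]: "range (rev_curve c) = range c"
  unfolding rev_curve_def by (metis surj_def minus_minus image_cong image_image range_composition)

section \<open>The Gauss integral\<close>

definition gauss_integrand :: "(real \<Rightarrow> real^3) \<Rightarrow> (real \<Rightarrow> real^3) \<Rightarrow> real \<times> real \<Rightarrow> real" where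
  "gauss_integrand c d = (\<lambda>(t, u). (c t - d u) \<bullet> cross3 (velocity c t) (velocity d u)
     / norm (c t - d u) ^ 3)"

lemma gauss_lk_eq_integral:
  "gauss_lk c d = 1 / (4 * pi) * integral (cbox (0, 0) (1, 1)) (gauss_integrand c d)"
  unfolding gauss_lk_def gauss_integrand_def case_prod_unfold ..

lemma continuous_on_gauss_integrand:
  assumes c: "closed_C1_curve c" and d: "closed_C1_curve d" and disj: "range c \<inter> range d = {}"
  shows "continuous_on S (gauss_integrand c d)"
proof -
  note [continuous_intros] = continuous_on_closed_C1_curve[OF c] continuous_on_closed_C1_curve[OF d]
    continuous_on_cross
  have "c t \<noteq> d u" for t u
    using disj by blast
  then show ?thesis
    unfolding gauss_integrand_def case_prod_unfold by (intro continuous_intros) auto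
qed

lemma gauss_lk_commute:
  assumes c: "closed_C1_curve c" and d: "closed_C1_curve d" and disj: "range c \<inter> range d = {}"
  shows "gauss_lk d c = gauss_lk c d"
proof -
  have swap: "gauss_integrand d c (t, u) = gauss_integrand c d (u, t)" for t u
  proof -
    have "(d t - c u) \<bullet> cross3 (velocity d t) (velocity c u)
        = (c u - d t) \<bullet> cross3 (velocity c u) (velocity d t)"
      by (metis cross_skew inner_minus_left inner_minus_right minus_diff_eq)
    then show ?thesis
      unfolding gauss_integrand_def by (simp add: norm_minus_commute)
  qed
  have cont_cd: "continuous_on S (gauss_integrand c d)" for S
    using continuous_on_gauss_integrand[OF c d disj] .
  have swap_eq: "(\<lambda>(t, u). gauss_integrand c d (u, t)) = gauss_integrand d c"
    by (auto simp: swap)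
  then have cont_dc: "continuous_on S (\<lambda>(t, u). gauss_integrand c d (u, t))" for S
    using continuous_on_gauss_integrand[OF d c] disj by (simp add: Int_commute)
  have "integral (cbox (0, 0) (1, 1)) (gauss_integrand d c)
      = integral {0..1} (\<lambda>t. integral {0..1} (\<lambda>u. gauss_integrand c d (u, t)))"
    using integral_prod_continuous[OF cont_dc, of "0::real" "0::real" 1 1] unfolding swap_eq by (simp add: swap)
  also have "\<dots> = integral {0..1} (\<lambda>u. integral {0..1} (\<lambda>t. gauss_integrand c d (u, t)))"
    using integral_swap_continuous[where f = "\<lambda>t u. gauss_integrand c d (u, t)",
        of "0::real" "0::real" 1 1, OF cont_dc]
    by simp
  also have "\<dots> = integral (cbox (0, 0) (1, 1)) (gauss_integrand c d)"
    using integral_prod_continuous[OF cont_cd, of "0::real" "0::real" 1 1] by simp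
  finally show ?thesis
    unfolding gauss_lk_eq_integral by simp
qed

lemma integral_reflect_periodic:
  fixes g :: "real \<Rightarrow> 'a::banach"
  assumes "\<And>x. g (x + 1) = g x"
  shows "integral {0..1} (\<lambda>x. g (- x)) = integral {0..1} g"
proof -
  have "integral {0..1} (\<lambda>x. g (- x)) = integral {-1..0} g"
    using Henstock_Kurzweil_Integration.integral_reflect_real[of 0 "-1" g] by simp
  also have "\<dots> = integral {0..1} g"
    using integral_shift_real_ivl[of 0 1 1 g] assms by simp
  finally show ?thesis .
qed

lemma gauss_lk_rev_curve_left:
  assumes c: "closed_C1_curve c" and d: "closed_C1_curve d" and disj: "range c \<inter> range d = {}"
  shows "gauss_lk (rev_curve c) d = - gauss_lk c d"
proof -
  define K where "K t = integral {0..1} (\<lambda>u. gauss_integrand c d (t, u))" for t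
  have reflect: "gauss_integrand (rev_curve c) d (t, u) = - gauss_integrand c d (- t, u)" for t u
    unfolding gauss_integrand_def velocity_rev_curve(2)[OF c] by (simp add: rev_curve_def)
  have cont: "continuous_on S (gauss_integrand c d)" for S
    using continuous_on_gauss_integrand[OF c d disj] .
  have cont_reflect: "continuous_on S (\<lambda>p. gauss_integrand c d (- fst p, snd p))" for S
    by (rule continuous_on_compose2[OF cont[of UNIV]]) (auto intro!: continuous_intros)
  have "K (t + 1) = K t" for t
    unfolding K_def gauss_integrand_def
    using closed_C1_curve_periodic[OF c] velocity_periodic[OF c] by simp
  then have "integral {0..1} (\<lambda>t. K (- t)) = integral {0..1} K"
    by (rule integral_reflect_periodic)
  moreover have "integral (cbox (0, 0) (1, 1)) (gauss_integrand (rev_curve c) d)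
      = - integral (cbox (0, 0) (1, 1)) (\<lambda>p. gauss_integrand c d (- fst p, snd p))"
    unfolding reflect[of "fst p" "snd p" for p, simplified] by (rule integral_neg)
  moreover have "integral (cbox (0, 0) (1, 1)) (\<lambda>p. gauss_integrand c d (- fst p, snd p))
      = integral {0..1} (\<lambda>t. K (- t))"
    using integral_prod_continuous[OF cont_reflect, of "0::real" "0::real" 1 1] by (simp add: K_def)
  moreover have "integral (cbox (0, 0) (1, 1)) (gauss_integrand c d) = integral {0..1} K"
    using integral_prod_continuous[OF cont, of "0::real" "0::real" 1 1] by (simp add: K_def[abs_def])
  ultimately show ?thesis
    unfolding gauss_lk_eq_integral by simp
qed

lemma gauss_lk_rev_curve_right:
  assumes c: "closed_C1_curve c" and d: "closed_C1_curve d" and disj: "range c \<inter> range d = {}"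
  shows "gauss_lk c (rev_curve d) = - gauss_lk c d"
  using gauss_lk_commute[OF c closed_C1_curve_rev_curve[OF d]] gauss_lk_rev_curve_left[OF d c]
    gauss_lk_commute[OF c d] disj
  by (simp add: Int_commute)

section \<open>Invariance under push-off\<close>

lemma has_real_derivative_norm:
  fixes X :: "real \<Rightarrow> 'a::real_inner"
  assumes "(X has_vector_derivative X') (at x within S)" "X x \<noteq> 0"
  shows "((\<lambda>x. norm (X x)) has_real_derivative (X x \<bullet> X') / norm (X x)) (at x within S)"
proof -
  have "((\<lambda>x. norm (X x)) has_derivative (*) ((X x \<bullet> X') / norm (X x))) (at x within S)"
    by (rule has_derivative_eq_rhs[OF has_derivative_compose[OF
          assms(1)[unfolded has_vector_derivative_def] has_derivative_norm[OF assms(2)]]])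
      (auto simp: sgn_div_norm inner_commute divide_inverse ac_simps)
  then show ?thesis
    by (simp add: has_field_derivative_def ac_simps)
qed

lemma has_real_derivative_triple_div_norm_cube:
  fixes X B :: "real \<Rightarrow> real^3"
  assumes X: "(X has_vector_derivative X') (at x within S)"
    and B: "(B has_vector_derivative B') (at x within S)"
    and nz: "X x \<noteq> 0"
  shows "((\<lambda>x. X x \<bullet> cross3 a (B x) / norm (X x) ^ 3) has_real_derivative
     (X' \<bullet> cross3 a (B x) + X x \<bullet> cross3 a B') / norm (X x) ^ 3
      - 3 * (X x \<bullet> cross3 a (B x)) * (X x \<bullet> X') / norm (X x) ^ 5) (at x within S)"
proof -
  have cross: "bounded_bilinear (cross3 :: real^3 \<Rightarrow> real^3 \<Rightarrow> real^3)"
    using bilinear_conv_bounded_bilinear bilinear_cross by blast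
  have "((\<lambda>x. cross3 a (B x)) has_vector_derivative cross3 a B') (at x within S)"
    using bounded_bilinear.has_vector_derivative[OF cross
        has_vector_derivative_const B] by simp
  then have num: "((\<lambda>x. X x \<bullet> cross3 a (B x)) has_real_derivative
      X' \<bullet> cross3 a (B x) + X x \<bullet> cross3 a B') (at x within S)"
    using bounded_bilinear.has_vector_derivative[OF bounded_bilinear_inner X]
    by (simp add: has_real_derivative_iff_has_vector_derivative add.commute)
  have den: "((\<lambda>x. norm (X x) ^ 3) has_real_derivative 3 * norm (X x) ^ 2 * ((X x \<bullet> X') / norm (X x)))
      (at x within S)"
    using DERIV_power[OF has_real_derivative_norm[OF X nz], of 3] by (simp add: ac_simps)
  have "norm (X x) ^ 3 \<noteq> 0"
    using nz by simp
  from DERIV_divide[OF num den this] show ?thesis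
    by (rule DERIV_cong) (use nz in \<open>simp add: field_simps eval_nat_numeral\<close>)
qed

text \<open>The first variation of the Gauss integrand of c and d when d is pushed in the direction w.\<close>

definition gauss_variation ::
    "(real \<Rightarrow> real^3) \<Rightarrow> (real \<Rightarrow> real^3) \<Rightarrow> (real \<Rightarrow> real^3) \<Rightarrow> real \<times> real \<Rightarrow> real" where
  "gauss_variation c d w = (\<lambda>(t, u).
     ((- w u) \<bullet> cross3 (velocity c t) (velocity d u) + (c t - d u) \<bullet> cross3 (velocity c t) (velocity w u))
       / norm (c t - d u) ^ 3
     - 3 * ((c t - d u) \<bullet> cross3 (velocity c t) (velocity d u)) * ((c t - d u) \<bullet> - w u)
       / norm (c t - d u) ^ 5)"

lemma gauss_integrand_push_off_has_field_derivative:
  assumes d: "closed_C1_curve d" and w: "closed_C1_curve w" and miss: "c t \<noteq> d u + s *\<^sub>R w u"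
  shows "((\<lambda>s. gauss_integrand c (\<lambda>u. d u + s *\<^sub>R w u) (t, u)) has_field_derivative
      gauss_variation c (\<lambda>u. d u + s *\<^sub>R w u) w (t, u)) (at s within S)"
proof -
  have X: "((\<lambda>s. c t - (d u + s *\<^sub>R w u)) has_vector_derivative - w u) (at s within S)"
    by (auto intro!: derivative_eq_intros)
  have B: "((\<lambda>s. velocity d u + s *\<^sub>R velocity w u) has_vector_derivative velocity w u)
      (at s within S)"
    by (auto intro!: derivative_eq_intros)
  have "c t - (d u + s *\<^sub>R w u) \<noteq> 0"
    using miss by simp
  from has_real_derivative_triple_div_norm_cube[OF X B this, of "velocity c t"] show ?thesis
    unfolding gauss_integrand_def gauss_variation_def velocity_add_scaleR[OF d w] by simp
qed

text \<open>The variation is a divergence: \<open>- \<partial>\<^sub>t P + \<partial>\<^sub>u Q\<close> for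
  \<open>P = X \<bullet> (W \<times> Y) / |X|\<^sup>3\<close> and \<open>Q = X \<bullet> (a \<times> W) / |X|\<^sup>3\<close>,
  where \<open>X = c t - d u\<close>, \<open>a = c' t\<close>, \<open>Y = d' u\<close>, \<open>W = w u\<close>.\<close>

lemma gauss_variation_divergence_form:
  fixes X W a Y W' :: "real^3"
  assumes "X \<noteq> 0"
  shows "((- W) \<bullet> cross3 a Y + X \<bullet> cross3 a W') / norm X ^ 3
          - 3 * (X \<bullet> cross3 a Y) * (X \<bullet> - W) / norm X ^ 5
   = ((- Y) \<bullet> cross3 a W + X \<bullet> cross3 a W') / norm X ^ 3
          - 3 * (X \<bullet> cross3 a W) * (X \<bullet> - Y) / norm X ^ 5
     - (a \<bullet> cross3 W Y / norm X ^ 3 - 3 * (X \<bullet> cross3 W Y) * (X \<bullet> a) / norm X ^ 5)"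
proof -
  have "(X \<bullet> X) * (W \<bullet> cross3 a Y - Y \<bullet> cross3 a W - a \<bullet> cross3 W Y)
      = 3 * ((X \<bullet> cross3 a Y) * (X \<bullet> W) - (X \<bullet> cross3 W Y) * (X \<bullet> a) - (X \<bullet> cross3 a W) * (X \<bullet> Y))"
    by (simp add: cross3_def inner_vec_def sum_3 vector_def algebra_simps)
  moreover have "norm X ^ 5 = (X \<bullet> X) * norm X ^ 3"
    by (simp add: power2_norm_eq_inner[symmetric] eval_nat_numeral)
  moreover have "norm X \<noteq> 0"
    using assms by simp
  ultimately show ?thesis
    by (simp add: divide_simps) (simp add: algebra_simps)
qed

lemma integral_box_derivative_periodic_snd:
  fixes f :: "real \<times> real \<Rightarrow> real"
  assumes cont: "continuous_on (cbox (a, c) (b, d)) f" and "c \<le> d"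
    and deriv: "\<And>t u. u \<in> {c..d} \<Longrightarrow> ((\<lambda>u. F t u) has_real_derivative f (t, u)) (at u within {c..d})"
    and periodic: "\<And>t. F t d = F t c"
  shows "integral (cbox (a, c) (b, d)) f = 0"
proof -
  have "integral {c..d} (\<lambda>u. f (t, u)) = 0" for t
    using fundamental_theorem_of_calculus[OF \<open>c \<le> d\<close>, of "F t" "\<lambda>u. f (t, u)"] deriv periodic
    by (simp add: has_real_derivative_iff_has_vector_derivative integral_unique)
  then show ?thesis
    using integral_prod_continuous[OF cont] by simp
qed

lemma integral_box_derivative_periodic_fst:
  fixes f :: "real \<times> real \<Rightarrow> real"
  assumes cont: "continuous_on (cbox (a, c) (b, d)) f" and "a \<le> b"
    and deriv: "\<And>t u. t \<in> {a..b} \<Longrightarrow> ((\<lambda>t. F t u) has_real_derivative f (t, u)) (at t within {a..b})"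
    and periodic: "\<And>u. F b u = F a u"
  shows "integral (cbox (a, c) (b, d)) f = 0"
proof -
  have "integral {a..b} (\<lambda>t. f (t, u)) = 0" for u
    using fundamental_theorem_of_calculus[OF \<open>a \<le> b\<close>, of "\<lambda>t. F t u" "\<lambda>t. f (t, u)"] deriv periodic
    by (simp add: has_real_derivative_iff_has_vector_derivative integral_unique)
  moreover have "continuous_on (cbox (a, c) (b, d)) (\<lambda>(t, u). f (t, u))"
    using cont by (simp add: case_prod_unfold)
  ultimately show ?thesis
    using integral_prod_continuous[OF cont] integral_swap_continuous[where f = "\<lambda>t u. f (t, u)"]
    by simp
qed

lemma integral_gauss_variation_eq_0:
  assumes c: "closed_C1_curve c" and d: "closed_C1_curve d" and w: "closed_C1_curve w"
    and disj: "range c \<inter> range d = {}"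
  shows "integral (cbox (0, 0) (1, 1)) (gauss_variation c d w) = 0"
proof -
  define X where "X t u = c t - d u" for t u
  have X_nz: "X t u \<noteq> 0" for t u
    using disj by (auto simp: X_def)
  define P where "P t u = X t u \<bullet> cross3 (w u) (velocity d u) / norm (X t u) ^ 3" for t u
  define Q where "Q t u = X t u \<bullet> cross3 (velocity c t) (w u) / norm (X t u) ^ 3" for t u
  define P_t where "P_t = (\<lambda>(t, u). velocity c t \<bullet> cross3 (w u) (velocity d u) / norm (X t u) ^ 3
     - 3 * (X t u \<bullet> cross3 (w u) (velocity d u)) * (X t u \<bullet> velocity c t) / norm (X t u) ^ 5)"
  define Q_u where "Q_u = (\<lambda>(t, u).
     ((- velocity d u) \<bullet> cross3 (velocity c t) (w u) + X t u \<bullet> cross3 (velocity c t) (velocity w u))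
       / norm (X t u) ^ 3
     - 3 * (X t u \<bullet> cross3 (velocity c t) (w u)) * (X t u \<bullet> - velocity d u) / norm (X t u) ^ 5)"
  note [continuous_intros] = continuous_on_closed_C1_curve[OF c] continuous_on_closed_C1_curve[OF d]
    continuous_on_closed_C1_curve[OF w] continuous_on_cross
  have cont_P_t: "continuous_on S P_t" for S
    unfolding P_t_def X_def case_prod_unfold
    by (intro continuous_intros) (use X_nz in \<open>auto simp: X_def\<close>)
  have cont_Q_u: "continuous_on S Q_u" for S
    unfolding Q_u_def X_def case_prod_unfold
    by (intro continuous_intros) (use X_nz in \<open>auto simp: X_def\<close>)
  have "((\<lambda>t. P t u) has_real_derivative P_t (t, u)) (at t within S)" for t u S
  proof -
    have "((\<lambda>t. X t u) has_vector_derivative velocity c t) (at t within S)"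
      unfolding X_def
      by (auto intro!: derivative_eq_intros closed_C1_curve_has_vector_derivative[OF c])
    from has_real_derivative_triple_div_norm_cube[OF this has_vector_derivative_const X_nz]
    show ?thesis
      unfolding P_def P_t_def by simp
  qed
  moreover have "P 1 u = P 0 u" for u
    unfolding P_def X_def using closed_C1_curve_periodic[OF c, of 0] by simp
  ultimately have int_P_t: "integral (cbox (0, 0) (1, 1)) P_t = 0"
    by (intro integral_box_derivative_periodic_fst[where F = P, OF cont_P_t]) auto
  have "((\<lambda>u. Q t u) has_real_derivative Q_u (t, u)) (at u within S)" for t u S
  proof -
    have "((\<lambda>u. X t u) has_vector_derivative - velocity d u) (at u within S)"
      unfolding X_def
      by (auto intro!: derivative_eq_intros closed_C1_curve_has_vector_derivative[OF d])
    from has_real_derivative_triple_div_norm_cube[OF this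
        closed_C1_curve_has_vector_derivative[OF w] X_nz]
    show ?thesis
      unfolding Q_def Q_u_def by simp
  qed
  moreover have "Q t 1 = Q t 0" for t
    unfolding Q_def X_def using closed_C1_curve_periodic[OF d, of 0] closed_C1_curve_periodic[OF w, of 0]
    by simp
  ultimately have int_Q_u: "integral (cbox (0, 0) (1, 1)) Q_u = 0"
    by (intro integral_box_derivative_periodic_snd[where F = Q, OF cont_Q_u]) auto
  have "gauss_variation c d w (t, u) = Q_u (t, u) - P_t (t, u)" for t u
    unfolding gauss_variation_def P_t_def Q_u_def X_def prod.case
    by (rule gauss_variation_divergence_form[OF X_nz[unfolded X_def]])
  then have "gauss_variation c d w = (\<lambda>p. Q_u p - P_t p)"
    by (auto simp: fun_eq_iff)
  then show ?thesis
    using integral_diff[OF integrable_continuous[OF cont_Q_u] integrable_continuous[OF cont_P_t]]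
      int_P_t int_Q_u
    by simp
qed

lemma gauss_lk_push_off_eq:
  assumes c: "closed_C1_curve c" and d: "closed_C1_curve d" and w: "closed_C1_curve w"
    and "0 \<le> \<epsilon>" and miss: "\<And>s t u. 0 \<le> s \<Longrightarrow> s \<le> \<epsilon> \<Longrightarrow> c t \<noteq> d u + s *\<^sub>R w u"
  shows "gauss_lk c (\<lambda>u. d u + \<epsilon> *\<^sub>R w u) = gauss_lk c d"
proof -
  define U where "U = {0..\<epsilon>}"
  define d_s where "d_s s = (\<lambda>u. d u + s *\<^sub>R w u)" for s
  define I where "I s = integral (cbox (0, 0) (1, 1)) (gauss_integrand c (d_s s))" for s
  have d_s: "closed_C1_curve (d_s s)" for s
    unfolding d_s_def by (rule closed_C1_curve_add_scaleR[OF d w])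
  have disj: "range c \<inter> range (d_s s) = {}" if "s \<in> U" for s
    using miss that by (auto simp: U_def d_s_def)
  have "(I has_field_derivative 0) (at s within U)" if s: "s \<in> U" for s
  proof -
    note [continuous_intros] = continuous_on_closed_C1_curve[OF c] continuous_on_closed_C1_curve[OF d]
      continuous_on_closed_C1_curve[OF w] continuous_on_cross
    have "continuous_on (U \<times> cbox (0, 0) (1, 1)) (\<lambda>(s, p). gauss_variation c (d_s s) w p)"
      unfolding gauss_variation_def d_s_def velocity_add_scaleR[OF d w] case_prod_unfold
      by (intro continuous_intros) (use miss in \<open>auto simp: U_def\<close>)
    then have "(I has_field_derivative integral (cbox (0, 0) (1, 1)) (gauss_variation c (d_s s) w))
        (at s within U)"
      unfolding I_def using s disj
      by (intro leibniz_rule_field_derivative integrable_continuous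
          continuous_on_gauss_integrand[OF c d_s])
        (auto simp: d_s_def U_def intro!: gauss_integrand_push_off_has_field_derivative[OF d w])
    then show ?thesis
      using integral_gauss_variation_eq_0[OF c d_s w disj[OF s]] by simp
  qed
  then obtain k where "\<forall>s\<in>U. I s = k"
    using has_field_derivative_zero_constant[of U I] by (auto simp: U_def)
  then have "I \<epsilon> = I 0"
    using \<open>0 \<le> \<epsilon>\<close> by (simp add: U_def)
  then show ?thesis
    by (simp add: gauss_lk_eq_integral I_def d_s_def)
qed

section \<open>Reorienting a framed link\<close>

lemma sum_sum_sign_flip:
  fixes g :: "'a \<Rightarrow> 'a \<Rightarrow> real"
  assumes "finite A" "R \<subseteq> A" and sym: "\<And>i j. i \<in> A \<Longrightarrow> j \<in> A \<Longrightarrow> i \<noteq> j \<Longrightarrow> g i j = g j i"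
  shows "(\<Sum>i\<in>A. \<Sum>j\<in>A. (if i \<in> R then -1 else 1) * (if j \<in> R then -1 else 1) * g i j)
     = (\<Sum>i\<in>A. \<Sum>j\<in>A. g i j) - 4 * (\<Sum>i\<in>R. \<Sum>j\<in>A - R. g i j)"
proof -
  define C where "C = A - R"
  define \<sigma> where "\<sigma> i = (if i \<in> R then -1 else 1 :: real)" for i
  have A: "A = R \<union> C" "R \<inter> C = {}" "finite R" "finite C"
    using assms(1,2) finite_subset by (auto simp: C_def)
  have blocks: "(\<Sum>i\<in>A. \<Sum>j\<in>A. f i j) = (\<Sum>i\<in>R. \<Sum>j\<in>R. f i j) + (\<Sum>i\<in>R. \<Sum>j\<in>C. f i j)
      + (\<Sum>i\<in>C. \<Sum>j\<in>R. f i j) + (\<Sum>i\<in>C. \<Sum>j\<in>C. f i j)" for f :: "'a \<Rightarrow> 'a \<Rightarrow> real"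
    unfolding A(1) using A(2-4) by (simp add: sum.union_disjoint sum.distrib)
  have "(\<Sum>i\<in>C. \<Sum>j\<in>R. g i j) = (\<Sum>j\<in>R. \<Sum>i\<in>C. g i j)"
    by (rule sum.swap)
  also have "\<dots> = (\<Sum>i\<in>R. \<Sum>j\<in>C. g i j)"
    using A(2) assms(2) by (intro sum.cong refl sym) (auto simp: C_def)
  finally have swap: "(\<Sum>i\<in>C. \<Sum>j\<in>R. g i j) = (\<Sum>i\<in>R. \<Sum>j\<in>C. g i j)" .
  have "(\<Sum>i\<in>A. \<Sum>j\<in>A. \<sigma> i * \<sigma> j * g i j) = (\<Sum>i\<in>R. \<Sum>j\<in>R. g i j) - (\<Sum>i\<in>R. \<Sum>j\<in>C. g i j)
      - (\<Sum>i\<in>C. \<Sum>j\<in>R. g i j) + (\<Sum>i\<in>C. \<Sum>j\<in>C. g i j)"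
    unfolding blocks[of "\<lambda>i j. \<sigma> i * \<sigma> j * g i j"]
    by (simp add: \<sigma>_def C_def sum_negf)
  then show ?thesis
    unfolding blocks[of g] C_def[symmetric] \<sigma>_def[symmetric] swap by simp
qed

lemma gauss_lk_if_rev_curve:
  assumes c: "closed_C1_curve c" and d: "closed_C1_curve d" and disj: "range c \<inter> range d = {}"
  shows "gauss_lk (if P then rev_curve c else c) (if Q then rev_curve d else d)
     = (if P then -1 else 1) * (if Q then -1 else 1) * gauss_lk c d"
  using gauss_lk_rev_curve_left[OF c d disj] gauss_lk_rev_curve_right[OF c d disj]
    gauss_lk_rev_curve_left[OF c closed_C1_curve_rev_curve[OF d]] disj
  by auto

lemma smooth_link_closed_C1_curve: "smooth_link n \<gamma> \<Longrightarrow> i < n \<Longrightarrow> closed_C1_curve (\<gamma> i)"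
  unfolding smooth_link_def smooth_knot_def closed_C1_curve_def by auto

lemma smooth_link_disjoint:
  "smooth_link n \<gamma> \<Longrightarrow> i < n \<Longrightarrow> j < n \<Longrightarrow> i \<noteq> j \<Longrightarrow> range (\<gamma> i) \<inter> range (\<gamma> j) = {}"
  unfolding smooth_link_def by auto

lemma framing_field_closed_C1_curve: "framing_field \<gamma> v \<Longrightarrow> closed_C1_curve v"
  unfolding framing_field_def closed_C1_curve_def by auto

lemma is_pushoff_closed_C1_curve:
  "is_pushoff n \<gamma> j v \<delta> \<Longrightarrow> closed_C1_curve (\<gamma> j) \<Longrightarrow> closed_C1_curve v \<Longrightarrow> closed_C1_curve \<delta>"
  unfolding is_pushoff_def by (auto intro: closed_C1_curve_add_scaleR)

lemma is_pushoff_disjoint: "is_pushoff n \<gamma> j v \<delta> \<Longrightarrow> i < n \<Longrightarrow> range (\<gamma> i) \<inter> range \<delta> = {}"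
  unfolding is_pushoff_def by force

lemma gauss_lk_is_pushoff:
  assumes L: "smooth_link n \<gamma>" and v: "closed_C1_curve v" and \<delta>: "is_pushoff n \<gamma> j v \<delta>"
    and "i < n" "j < n" "i \<noteq> j"
  shows "gauss_lk (\<gamma> i) \<delta> = gauss_lk (\<gamma> i) (\<gamma> j)"
proof -
  obtain \<epsilon> where "\<epsilon> > 0" and \<delta>_eq: "\<delta> = (\<lambda>t. \<gamma> j t + \<epsilon> *\<^sub>R v t)"
    and miss: "\<forall>e. 0 < e \<and> e \<le> \<epsilon> \<longrightarrow> (\<forall>i<n. \<forall>s t. \<gamma> i s \<noteq> \<gamma> j t + e *\<^sub>R v t)"
    using \<delta> unfolding is_pushoff_def by blast
  have "\<gamma> i t \<noteq> \<gamma> j u" for t u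
    using smooth_link_disjoint[OF L \<open>i < n\<close> \<open>j < n\<close> \<open>i \<noteq> j\<close>] by blast
  then have "\<gamma> i t \<noteq> \<gamma> j u + s *\<^sub>R v u" if "0 \<le> s" "s \<le> \<epsilon>" for s t u
    using miss that \<open>i < n\<close> by (cases "s = 0") auto
  then show ?thesis
    unfolding \<delta>_eq using \<open>\<epsilon> > 0\<close> assms(4,5)
    by (intro gauss_lk_push_off_eq smooth_link_closed_C1_curve[OF L] v) auto
qed

lemma fr_orient:
  assumes L: "smooth_link n \<gamma>" and v: "\<forall>j<n. framing_field (\<gamma> j) (v j)"
    and \<delta>: "\<forall>j<n. is_pushoff n \<gamma> j (v j) (\<delta> j)" and R: "R \<subseteq> {..<n}"
  shows "fr n (orient R \<gamma>) (orient R \<delta>) = fr n \<gamma> \<delta> - 4 * lk_sub n \<gamma> R"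
proof -
  define g where "g i j = gauss_lk (\<gamma> i) (\<delta> j)" for i j
  have off_diagonal: "g i j = gauss_lk (\<gamma> i) (\<gamma> j)" if "i < n" "j < n" "i \<noteq> j" for i j
    unfolding g_def using that v \<delta>
    by (intro gauss_lk_is_pushoff[OF L framing_field_closed_C1_curve[of "\<gamma> j" "v j"]]) auto
  have sym: "g i j = g j i" if "i \<in> {..<n}" "j \<in> {..<n}" "i \<noteq> j" for i j
  proof -
    have "gauss_lk (\<gamma> j) (\<gamma> i) = gauss_lk (\<gamma> i) (\<gamma> j)"
      using that by (intro gauss_lk_commute smooth_link_closed_C1_curve[OF L] smooth_link_disjoint[OF L]) auto
    then show ?thesis
      using that off_diagonal by simp
  qed
  have closed_\<delta>: "closed_C1_curve (\<delta> j)" if "j < n" for j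
    using that v \<delta> is_pushoff_closed_C1_curve smooth_link_closed_C1_curve[OF L]
      framing_field_closed_C1_curve by blast
  have "gauss_lk (orient R \<gamma> i) (orient R \<delta> j)
      = (if i \<in> R then -1 else 1) * (if j \<in> R then -1 else 1) * g i j" if "i < n" "j < n" for i j
    unfolding orient_def g_def using that \<delta>
    by (intro gauss_lk_if_rev_curve smooth_link_closed_C1_curve[OF L] closed_\<delta>
        is_pushoff_disjoint[of n \<gamma> j]) auto
  then have "fr n (orient R \<gamma>) (orient R \<delta>)
      = (\<Sum>i<n. \<Sum>j<n. (if i \<in> R then -1 else 1) * (if j \<in> R then -1 else 1) * g i j)"
    unfolding fr_def by simp
  also have "\<dots> = fr n \<gamma> \<delta> - 4 * (\<Sum>i\<in>R. \<Sum>j\<in>{..<n} - R. g i j)"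
    unfolding fr_def g_def[symmetric] by (rule sum_sum_sign_flip[OF _ R sym]) auto
  also have "(\<Sum>i\<in>R. \<Sum>j\<in>{..<n} - R. g i j) = lk_sub n \<gamma> R"
    unfolding lk_sub_def using R off_diagonal by (intro sum.cong refl) auto
  finally show ?thesis .
qed

theorem lemma4:
  fixes n :: nat and \<gamma> v \<delta> :: "nat \<Rightarrow> real \<Rightarrow> real^3" and a :: real
  assumes "smooth_link n \<gamma>"
    and "\<forall>j<n. framing_field (\<gamma> j) (v j)"
    and "\<forall>j<n. is_pushoff n \<gamma> j (v j) (\<delta> j)"
    and "fr n \<gamma> \<delta> = 0"
    and "a > 0"
  shows "(\<Sum>R\<in>Pow {..<n}. (-1) ^ n * a powr fr n (orient R \<gamma>) (orient R \<delta>))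
       = (-1) ^ n * (\<Sum>S\<in>Pow {..<n}. a powr (- 4 * lk_sub n \<gamma> S))"
proof -
  have "fr n (orient R \<gamma>) (orient R \<delta>) = - 4 * lk_sub n \<gamma> R" if "R \<in> Pow {..<n}" for R
    using fr_orient[OF assms(1-3)] that assms(4) by simp
  then show ?thesis
    by (simp add: sum_distrib_left)
qed

end
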